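(* For any $n$, any $0\le k\le n$, and any $\lambda,\mu\vdash n$, $$m\big((\lambda,\mu),\alpha_{H_n^k}\big)=\frac1{n!}\sum_{\pi\in S_n}\chi_\lambda(\pi)\chi_\mu(\pi)\,(n-|\mathrm{supp}(\pi)|)_k .$$
   Context: Permutations are composed as functions, and $\pi\in S_n$ is identified with the permutation matrix whose $(i,j)$ entry is $1$ iff $i=\pi(j)$. For $A\in GL_n(\mathbb{Z}_2)$ let $\eta(A)$ (resp. $\theta(A)$) be the partition obtained by sorting the row sums (resp. column sums) of $A$, computed as integers, in weakly decreasing order. For $0\le k\le n$, $H_n^k=\{A\in GL_n(\mathbb{Z}_2)\mid \eta(A)=(n,n-1,\dots,n-k+1,1^{n-k}),\ \theta(A)=((k+1)^{n-k},k,k-1,\dots,1)\}$. $\alpha_{H_n^k}$ is the complex permutation representation of $S_n\times S_n$ on the space with basis $H_n^k$ given by $(\pi,\sigma)\bullet A=\pi A\sigma^{-1}$. For $\lambda,\mu\vdash n$, $m((\lambda,\mu),\varphi)$ denotes the multiplicity in $\varphi$ of the irreducible $S_n\times S_n$-representation $S^\lambda\otimes S^\mu$. $\chi_\lambda$ is the irreducible character of $S_n$ indexed by $\lambda$, $\mathrm{supp}(\pi)$ the set of points moved by $\pi$, and $(m)_k=m(m-1)\cdots(m-k+1)$. *)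

theory Defs
  imports "Jordan_Normal_Form.Matrix" "HOL-Library.Z2" "HOL-Combinatorics.Permutations"
begin

definition GL2 :: "nat \<Rightarrow> bit mat set" where
  "GL2 n = {A \<in> carrier_mat n n. invertible_mat A}"

definition perm_mat :: "nat \<Rightarrow> (nat \<Rightarrow> nat) \<Rightarrow> bit mat" where
  "perm_mat n p = mat n n (\<lambda>(i,j). if i = p j then 1 else 0)"

definition act :: "nat \<Rightarrow> (nat \<Rightarrow> nat) \<Rightarrow> (nat \<Rightarrow> nat) \<Rightarrow> bit mat \<Rightarrow> bit mat" where
  "act n p s A = perm_mat n p * A * perm_mat n (inv_into UNIV s)"

(* row / column sums computed as integers *)
definition row_sum :: "bit mat \<Rightarrow> nat \<Rightarrow> nat" where
  "row_sum A i = card {j. j < dim_col A \<and> A $$ (i,j) = 1}"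

definition col_sum :: "bit mat \<Rightarrow> nat \<Rightarrow> nat" where
  "col_sum A j = card {i. i < dim_row A \<and> A $$ (i,j) = 1}"

definition eta :: "bit mat \<Rightarrow> nat list" where
  "eta A = rev (sort (map (row_sum A) [0..<dim_row A]))"

definition theta :: "bit mat \<Rightarrow> nat list" where
  "theta A = rev (sort (map (col_sum A) [0..<dim_col A]))"

definition H :: "nat \<Rightarrow> nat \<Rightarrow> bit mat set" where
  "H n k = {A \<in> GL2 n.
      eta A = map (\<lambda>i. n - i) [0..<k] @ replicate (n - k) 1 \<and>
      theta A = replicate (n - k) (k + 1) @ map (\<lambda>i. k - i) [0..<k]}"

definition is_partition :: "nat \<Rightarrow> nat list \<Rightarrow> bool" where
  "is_partition n la \<longleftrightarrow> sorted (rev la) \<and> (\<forall>x\<in>set la. 0 < x) \<and> sum_list la = n"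

definition part :: "nat list \<Rightarrow> nat \<Rightarrow> nat" where
  "part la i = (if i < length la then la ! i else 0)"

(* Irreducible character chi_lambda of S_n, via the Frobenius character formula
   chi_lambda(pi) = [x^(lambda+delta)] a_delta * p_{cycle type of pi}, in n variables,
   delta = (n-1,...,0), a_delta = sum_w sgn(w) prod_i x_i^(n-1-w(i)).
   The coefficient of prod_i x_i^(lambda_i - i + w(i)) in the product of power sums
   over the cycles of pi counts the maps g assigning to every cycle a variable index,
   i.e. maps g on {..<n}, constant on cycles, with |g^{-1}(i)| = lambda_i - i + w(i). *)
definition chi :: "nat \<Rightarrow> nat list \<Rightarrow> (nat \<Rightarrow> nat) \<Rightarrow> int" where
  "chi n la p = (\<Sum>w | w permutes {..<n}.
      sign w * int (card {g \<in> {..<n} \<rightarrow>\<^sub>E {..<n}.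
          (\<forall>x<n. g (p x) = g x) \<and>
          (\<forall>i<n. card {x. x < n \<and> g x = i} + i = part la i + w i)}))"

(* multiplicity of S^lambda (x) S^mu in a permutation representation of S_n x S_n
   on a finite set X with action a, computed as the character inner product
   (characters of S_n are real-valued; the permutation character is the number
   of fixed points) *)
definition mult_perm_rep ::
  "nat \<Rightarrow> 'x set \<Rightarrow> ((nat \<Rightarrow> nat) \<Rightarrow> (nat \<Rightarrow> nat) \<Rightarrow> 'x \<Rightarrow> 'x) \<Rightarrow> nat list \<Rightarrow> nat list \<Rightarrow> real" where
  "mult_perm_rep n X a la mu =
     (1 / (fact n)^2) * (\<Sum>p | p permutes {..<n}. \<Sum>s | s permutes {..<n}.
        real (card {x \<in> X. a p s x = x}) * of_int (chi n la p) * of_int (chi n mu s))"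

definition supp :: "nat \<Rightarrow> (nat \<Rightarrow> nat) \<Rightarrow> nat set" where
  "supp n p = {x. x < n \<and> p x \<noteq> x}"

definition ffac :: "nat \<Rightarrow> nat \<Rightarrow> nat" where
  "ffac m k = (\<Prod>i<k. m - i)"

end

theory Submission
  imports Defs "Jordan_Normal_Form.Determinant"
begin

(*
  Call the rows of a matrix in H n k with sums n, n - 1, ..., n - k + 1 heavy and the other rows
  light; call the columns with sum k + 1 light and those with sums k, ..., 1 stair columns.
  Counting ones shows that every light row has a single one, that these ones lie in n - k
  different light columns (different because the matrix is invertible), that every heavy row is
  full on the light columns, and that on heavy rows times stair columns the row sums k - a and
  column sums b + 1 force a staircase. Hence H n k consists of the matrices stair_mat n t xs,
  whose (i, j) entry is 1 iff i is below or equal to t j in the partial order where the heavy rows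
  xs come first, in list order, and the light rows are pairwise incomparable; the parameter
  (t, xs) is unique.

  The pair (pi, sigma) maps the parameter (t, xs) to (pi o t o inv sigma, map pi xs). Its fixed
  parameters are the t with inv t o pi o t = sigma together with the lists of k distinct fixed
  points of pi, which number (n - |supp pi|)_k. Summing against chi_mu(sigma), the fact that
  chi_mu is a class function collapses the sum over sigma to n! * chi_mu(pi).
*)

unbundle no m_inv_syntax \<comment> \<open>frees \<open>inv\<close> for the inverse of a function\<close>

lemma permutes_lessThan_less:
  assumes "p permutes {..<n}" and "i < n"
  shows "p i < n"
  using permutes_in_image[OF assms(1)] assms(2) by simp

lemma permutes_lessThan_inv_less:
  assumes "p permutes {..<n}" and "i < n"
  shows "inv p i < n"
  using permutes_lessThan_less[OF permutes_inv[OF assms(1)] assms(2)] .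

lemma card_filter_lessThan_permutes:
  assumes t: "t permutes {..<n}"
  shows "card {j. j < n \<and> P (t j)} = card {m. m < n \<and> P m}"
proof -
  have "bij_betw t {j. j < n \<and> P (t j)} {m. m < n \<and> P m}"
    using permutes_imp_bij[OF t] unfolding bij_betw_def inj_on_def
    by (auto simp: image_iff)
  then show ?thesis by (rule bij_betw_same_card)
qed

lemma ex_permutes_map_upt:
  assumes d: "distinct xs" and sub: "set xs \<subseteq> {..<n}"
  shows "\<exists>p. p permutes {..<n} \<and> map p [0..<length xs] = xs"
proof -
  define ys where "ys = xs @ sorted_list_of_set ({..<n} - set xs)"
  have dys: "distinct ys" and sys: "set ys = {..<n}" using d sub unfolding ys_def by auto
  then have lys: "length ys = n" by (metis card_lessThan distinct_card)
  define p where "p a = (if a < n then ys ! a else a)" for a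
  have "bij_betw ((!) ys) {..<n} {..<n}" using bij_betw_nth[OF dys] lys sys by simp
  then have "bij_betw p {..<n} {..<n}"
    unfolding p_def by (rule bij_betw_cong[THEN iffD1, rotated]) auto
  then have "p permutes {..<n}" by (rule bij_imp_permutes) (simp add: p_def)
  moreover have "map p [0..<length xs] = xs"
    using lys by (intro nth_equalityI) (auto simp: p_def ys_def nth_append)
  ultimately show ?thesis by blast
qed

lemma comp_inv_eq_iff_conj:
  assumes t: "t permutes {..<n}" and s: "s permutes {..<n}"
  shows "p \<circ> t \<circ> inv s = t \<longleftrightarrow> s = inv t \<circ> p \<circ> t"
proof
  assume "p \<circ> t \<circ> inv s = t"
  then have "p (t x) = t (s x)" for x
    using permutes_inverses(2)[OF s] by (metis comp_apply)
  then show "s = inv t \<circ> p \<circ> t"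
    using permutes_inverses(2)[OF t] by (simp add: fun_eq_iff)
next
  assume "s = inv t \<circ> p \<circ> t"
  then have "t (s x) = p (t x)" for x
    using permutes_inverses(1)[OF t] by simp
  then have "p (t (inv s y)) = t y" for y
    using permutes_inverses(1)[OF s] by metis
  then show "p \<circ> t \<circ> inv s = t" by (simp add: fun_eq_iff)
qed

lemma sum_card_conjugators:
  fixes f :: "(nat \<Rightarrow> nat) \<Rightarrow> real"
  assumes p: "p permutes {..<n}"
  shows "(\<Sum>s | s permutes {..<n}. real (card {t. t permutes {..<n} \<and> p \<circ> t \<circ> inv s = t}) * f s)
       = (\<Sum>t | t permutes {..<n}. f (inv t \<circ> p \<circ> t))"
proof -
  let ?P = "{s. s permutes {..<n}}"
  have fin: "finite ?P" by (simp add: finite_permutations)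
  have "(\<Sum>s\<in>?P. real (card {t. t permutes {..<n} \<and> p \<circ> t \<circ> inv s = t}) * f s)
      = (\<Sum>s\<in>?P. \<Sum>t\<in>?P. if p \<circ> t \<circ> inv s = t then f s else 0)"
    by (rule sum.cong[OF refl]) (simp add: sum.If_cases[OF fin] Int_def conj_commute)
  also have "\<dots> = (\<Sum>t\<in>?P. \<Sum>s\<in>?P. if p \<circ> t \<circ> inv s = t then f s else 0)"
    by (rule sum.swap)
  also have "\<dots> = (\<Sum>t\<in>?P. f (inv t \<circ> p \<circ> t))"
  proof (rule sum.cong[OF refl])
    fix t assume t: "t \<in> ?P"
    have "(\<Sum>s\<in>?P. if p \<circ> t \<circ> inv s = t then f s else 0)
        = (\<Sum>s\<in>?P. if s = inv t \<circ> p \<circ> t then f s else 0)"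
      by (rule sum.cong[OF refl]) (use comp_inv_eq_iff_conj t in auto)
    also have "\<dots> = f (inv t \<circ> p \<circ> t)"
      using t p fin by (simp add: sum.delta' permutes_compose permutes_inv)
    finally show "(\<Sum>s\<in>?P. if p \<circ> t \<circ> inv s = t then f s else 0) = f (inv t \<circ> p \<circ> t)" .
  qed
  finally show ?thesis .
qed

lemma nth_less_if_subset_lessThan: "length xs = k \<Longrightarrow> set xs \<subseteq> {..<n} \<Longrightarrow> a < k \<Longrightarrow> xs ! a < n"
  using nth_mem by blast

lemma mset_map_upt: "mset (map f [0..<n]) = image_mset f (mset_set {..<n})"
  by (metis atLeast_upt mset_map mset_set_set distinct_upt set_upt lessThan_atLeast0)

lemma mset_map_upt_permutes:
  assumes s: "s permutes {..<n}"
  shows "mset (map (f \<circ> s) [0..<n]) = mset (map f [0..<n])"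
proof -
  have "image_mset s (mset_set {..<n}) = mset_set (s ` {..<n})"
    using s by (intro image_mset_mset_set) (meson permutes_inj inj_on_subset subset_UNIV)
  also have "s ` {..<n} = {..<n}" using s by (rule permutes_image)
  finally show ?thesis unfolding mset_map_upt by (simp add: multiset.map_comp[symmetric])
qed

lemma mset_map_upt_split:
  assumes d: "distinct xs" and sub: "set xs \<subseteq> {..<n}"
    and heavy: "\<And>a. a < length xs \<Longrightarrow> f (xs ! a) = g a"
    and light: "\<And>i. i < n \<Longrightarrow> i \<notin> set xs \<Longrightarrow> f i = c"
  shows "mset (map f [0..<n]) = mset (map g [0..<length xs]) + replicate_mset (n - length xs) c"
proof -
  have "mset (map f [0..<n]) = image_mset f (mset_set {..<n})"
    by (rule mset_map_upt)
  also have "{..<n} = set xs \<union> ({..<n} - set xs)" using sub by auto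
  also have "mset_set (set xs \<union> ({..<n} - set xs)) = mset xs + mset_set ({..<n} - set xs)"
    using d by (subst mset_set_Union) (auto simp: mset_set_set)
  also have "image_mset f (mset xs + mset_set ({..<n} - set xs))
      = image_mset f (mset xs) + image_mset f (mset_set ({..<n} - set xs))"
    by simp
  also have "image_mset f (mset xs) = mset (map g [0..<length xs])"
  proof -
    have "image_mset f (mset xs) = mset (map (f \<circ> (!) xs) [0..<length xs])"
      by (metis mset_map map_map map_nth)
    also have "map (f \<circ> (!) xs) [0..<length xs] = map g [0..<length xs]" using heavy by auto
    finally show ?thesis .
  qed
  also have "image_mset f (mset_set ({..<n} - set xs))
      = image_mset (\<lambda>_. c) (mset_set ({..<n} - set xs))"
    using light by (intro image_mset_cong) auto
  also have "\<dots> = replicate_mset (n - length xs) c"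
    using sub d by (simp add: card_Diff_subset distinct_card image_mset_const_eq)
  finally show ?thesis by simp
qed

lemma count_mset_map_upt: "count (mset (map f [0..<n])) v = card {i. i < n \<and> f i = v}"
proof -
  have "{i \<in> {..<n}. f i = v} = {i. i < n \<and> f i = v}" by auto
  then show ?thesis
    unfolding mset_map_upt count_image_mset_eq_card_vimage[OF finite_lessThan] by (rule arg_cong)
qed

lemma rev_sort_eqI:
  assumes "mset xs = mset ys" and "sorted (rev ys)"
  shows "rev (sort xs) = ys"
  using assms properties_for_sort[of "rev ys" xs] by simp

lemma ex1_if_card_Collect_eq_1: "card {x. P x} = 1 \<Longrightarrow> \<exists>!x. P x"
  by (metis card_1_singletonE mem_Collect_eq singletonD singletonI)

lemma ffac_eq_prod_atLeastAtMost:
  assumes "k \<le> m"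
  shows "ffac m k = \<Prod>{m - k + 1..m}"
proof -
  have "{m - k + 1..m} = (\<lambda>i. m - i) ` {..<k}"
  proof
    show "{m - k + 1..m} \<subseteq> (\<lambda>i. m - i) ` {..<k}"
    proof
      fix x assume "x \<in> {m - k + 1..m}"
      then have "x = m - (m - x)" and "m - x < k" using assms by auto
      then show "x \<in> (\<lambda>i. m - i) ` {..<k}" by blast
    qed
  qed (use assms in auto)
  moreover have "inj_on (\<lambda>i. m - i) {..<k}" using assms by (intro inj_onI) auto
  ultimately show ?thesis unfolding ffac_def by (simp add: prod.reindex)
qed

lemma card_distinct_lists_subset:
  assumes "finite F"
  shows "card {xs. length xs = k \<and> distinct xs \<and> set xs \<subseteq> F} = ffac (card F) k"
proof (cases "k \<le> card F")
  case True
  then show ?thesis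
    using card_lists_distinct_length_eq[OF assms True] ffac_eq_prod_atLeastAtMost by simp
next
  case False
  then have "{xs. length xs = k \<and> distinct xs \<and> set xs \<subseteq> F} = {}"
    using assms by (auto dest: card_mono simp: distinct_card)
  moreover have "ffac (card F) k = 0"
    unfolding ffac_def using False by (intro prod_zero) auto
  ultimately show ?thesis by (metis card.empty)
qed

lemma card_fixed_points_lessThan: "card {x. x < n \<and> p x = x} = n - card (supp n p)"
proof -
  have "{x. x < n \<and> p x = x} = {..<n} - supp n p" and "supp n p \<subseteq> {..<n}"
    unfolding supp_def by auto
  then show ?thesis by (simp add: card_Diff_subset finite_subset)
qed

lemma staircase_iff_le:
  fixes M :: "nat \<Rightarrow> nat \<Rightarrow> bool"
  assumes rows: "\<And>a. a < k \<Longrightarrow> card {b. b < k \<and> M a b} = k - a"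
    and cols: "\<And>b. b < k \<Longrightarrow> card {a. a < k \<and> M a b} = Suc b"
  shows "a < k \<Longrightarrow> b < k \<Longrightarrow> M a b \<longleftrightarrow> a \<le> b"
proof (induction a arbitrary: b rule: less_induct)
  case (less a)
  have not_below: "\<not> M a b'" if "b' < a" for b'
  proof -
    have "b' < k" using that less.prems(1) by simp
    have sub: "{..b'} \<subseteq> {a'. a' < k \<and> M a' b'}"
    proof
      fix a' assume "a' \<in> {..b'}"
      then show "a' \<in> {a'. a' < k \<and> M a' b'}" using less.IH[of a' b'] \<open>b' < a\<close> \<open>b' < k\<close> by simp
    qed
    have "card {..b'} = card {a'. a' < k \<and> M a' b'}" using cols[OF \<open>b' < k\<close>] by simp
    then have "{..b'} = {a'. a' < k \<and> M a' b'}" by (rule card_subset_eq[rotated, OF sub]) simp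
    then have "M a b' \<Longrightarrow> a \<le> b'" using less.prems(1) by blast
    then show ?thesis using that by (meson not_le)
  qed
  have sub: "{b. b < k \<and> M a b} \<subseteq> {a..<k}"
    using not_below
    by (metis (mono_tags, lifting) atLeastLessThan_iff mem_Collect_eq not_le subsetI)
  have "card {b. b < k \<and> M a b} = card {a..<k}" using rows[OF less.prems(1)] by simp
  then have "{b. b < k \<and> M a b} = {a..<k}" by (rule card_subset_eq[rotated, OF sub]) simp
  then show ?case using less.prems(2)
    by (metis (no_types, lifting) atLeastLessThan_iff mem_Collect_eq)
qed

section \<open>Permutation matrices\<close>

lemma perm_mat_carrier [simp]: "perm_mat n p \<in> carrier_mat n n"
  unfolding perm_mat_def by simp

lemma perm_mat_mult_index:
  assumes p: "p permutes {..<n}" and A: "A \<in> carrier_mat n m" and i: "i < n" and j: "j < m"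
  shows "(perm_mat n p * A) $$ (i, j) = A $$ (inv p i, j)"
proof -
  have "(perm_mat n p * A) $$ (i, j) = (\<Sum>l = 0..<n. (if i = p l then 1 else 0) * A $$ (l, j))"
    using A i j by (simp add: perm_mat_def scalar_prod_def)
  also have "\<dots> = (\<Sum>l = 0..<n. if l = inv p i then A $$ (l, j) else 0)"
    by (rule sum.cong[OF refl]) (metis permutes_inv_eq[OF p] mult_1 mult_zero_left)
  also have "\<dots> = A $$ (inv p i, j)"
    using permutes_lessThan_inv_less[OF p i] by (simp add: sum.delta')
  finally show ?thesis .
qed

lemma mult_perm_mat_index:
  assumes q: "q permutes {..<n}" and A: "A \<in> carrier_mat m n" and i: "i < m" and j: "j < n"
  shows "(A * perm_mat n q) $$ (i, j) = A $$ (i, q j)"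
proof -
  have "(A * perm_mat n q) $$ (i, j) = (\<Sum>l = 0..<n. A $$ (i, l) * (if l = q j then 1 else 0))"
    using A i j by (simp add: perm_mat_def scalar_prod_def)
  also have "\<dots> = (\<Sum>l = 0..<n. if l = q j then A $$ (i, l) else 0)"
    by (rule sum.cong[OF refl]) simp
  also have "\<dots> = A $$ (i, q j)"
    using permutes_lessThan_less[OF q j] by (simp add: sum.delta')
  finally show ?thesis .
qed

lemma act_carrier: "A \<in> carrier_mat n n \<Longrightarrow> act n p s A \<in> carrier_mat n n"
  unfolding act_def by (metis mult_carrier_mat perm_mat_carrier)

lemma act_index:
  assumes p: "p permutes {..<n}" and s: "s permutes {..<n}" and A: "A \<in> carrier_mat n n"
    and i: "i < n" and j: "j < n"
  shows "act n p s A $$ (i, j) = A $$ (inv p i, inv s j)"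
proof -
  have "act n p s A $$ (i, j) = (perm_mat n p * A) $$ (i, inv s j)"
    unfolding act_def using permutes_inv[OF s] A i j
    by (intro mult_perm_mat_index) (auto intro: mult_carrier_mat[OF perm_mat_carrier])
  also have "\<dots> = A $$ (inv p i, inv s j)"
    using perm_mat_mult_index[OF p A i] permutes_lessThan_inv_less[OF s j] by simp
  finally show ?thesis .
qed

lemma perm_mat_mult_perm_mat_inv:
  assumes p: "p permutes {..<n}"
  shows "perm_mat n p * perm_mat n (inv p) = 1\<^sub>m n"
proof (rule eq_matI)
  fix i j assume "i < dim_row (1\<^sub>m n :: bit mat)" and "j < dim_col (1\<^sub>m n :: bit mat)"
  then have i: "i < n" and j: "j < n" by auto
  have "(perm_mat n p * perm_mat n (inv p)) $$ (i, j) = perm_mat n (inv p) $$ (inv p i, j)"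
    using perm_mat_mult_index[OF p perm_mat_carrier i j] .
  also have "\<dots> = 1\<^sub>m n $$ (i, j)"
    using i j permutes_lessThan_inv_less[OF p i]
    by (simp add: perm_mat_def) (metis permutes_inv_eq[OF p])
  finally show "(perm_mat n p * perm_mat n (inv p)) $$ (i, j) = 1\<^sub>m n $$ (i, j)" .
qed (auto simp: perm_mat_def)

lemma det_perm_mat_nonzero:
  assumes "p permutes {..<n}"
  shows "det (perm_mat n p) \<noteq> 0"
  using det_mult[OF perm_mat_carrier perm_mat_carrier, of n p "inv p"]
  by (simp add: perm_mat_mult_perm_mat_inv[OF assms])

lemma invertible_mat_if_det_nonzero:
  fixes A :: "'a :: field mat"
  assumes "A \<in> carrier_mat n n" and "det A \<noteq> 0"
  shows "invertible_mat A"
  using det_non_zero_imp_unit[OF assms, of "()"] assms(1)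
  unfolding Units_def ring_mat_def invertible_mat_def inverts_mat_def by auto

lemma invertible_act:
  assumes "p permutes {..<n}" and "s permutes {..<n}" and A: "A \<in> carrier_mat n n" and "det A \<noteq> 0"
  shows "invertible_mat (act n p s A)"
proof (rule invertible_mat_if_det_nonzero[OF act_carrier[OF A]])
  have "det (act n p s A) = det (perm_mat n p) * det A * det (perm_mat n (inv s))"
    unfolding act_def
    using det_mult[OF mult_carrier_mat[OF perm_mat_carrier A] perm_mat_carrier]
      det_mult[OF perm_mat_carrier A] by simp
  then show "det (act n p s A) \<noteq> 0"
    using assms(4) det_perm_mat_nonzero[OF assms(1)]
      det_perm_mat_nonzero[OF permutes_inv[OF assms(2)]]
    by simp
qed

lemma invertible_mat_rows_distinct:
  fixes A :: "'a :: semiring_1 mat"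
  assumes A: "A \<in> carrier_mat n n" and "invertible_mat A" and i: "i < n" "i' < n"
    and eq: "\<And>j. j < n \<Longrightarrow> A $$ (i, j) = A $$ (i', j)"
  shows "i = i'"
proof -
  obtain B where AB: "A * B = 1\<^sub>m n"
    using assms(2) A unfolding invertible_mat_def inverts_mat_def by auto
  then have "dim_col B = n" by (metis index_mult_mat(3) index_one_mat(3))
  moreover have "row A i = row A i'" using eq A i by (intro eq_vecI) auto
  ultimately have "(A * B) $$ (i, i) = (A * B) $$ (i', i)" using A i by (simp add: index_mult_mat)
  then have "(1 :: 'a) = (if i' = i then 1 else 0)" using AB i by simp
  then show ?thesis by (metis zero_neq_one)
qed

section \<open>Staircase matrices\<close>

abbreviation H_row_sums :: "nat \<Rightarrow> nat \<Rightarrow> nat list" where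
  "H_row_sums n k \<equiv> map (\<lambda>i. n - i) [0..<k] @ replicate (n - k) 1"

abbreviation H_col_sums :: "nat \<Rightarrow> nat \<Rightarrow> nat list" where
  "H_col_sums n k \<equiv> replicate (n - k) (k + 1) @ map (\<lambda>i. k - i) [0..<k]"

definition weakly_precedes :: "'a list \<Rightarrow> 'a \<Rightarrow> 'a \<Rightarrow> bool" where
  "weakly_precedes xs x y \<longleftrightarrow> (\<exists>a b. a \<le> b \<and> b < length xs \<and> x = xs ! a \<and> y = xs ! b)"

definition stair_le :: "'a list \<Rightarrow> 'a \<Rightarrow> 'a \<Rightarrow> bool" where
  "stair_le xs x y \<longleftrightarrow> x = y \<or> (x \<in> set xs \<and> y \<notin> set xs) \<or> weakly_precedes xs x y"

definition stair_mat :: "nat \<Rightarrow> (nat \<Rightarrow> nat) \<Rightarrow> nat list \<Rightarrow> bit mat" where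
  "stair_mat n t xs = mat n n (\<lambda>(i, j). if stair_le xs i (t j) then 1 else 0)"

definition stair_params :: "nat \<Rightarrow> nat \<Rightarrow> ((nat \<Rightarrow> nat) \<times> nat list) set" where
  "stair_params n k =
     {(t, xs). t permutes {..<n} \<and> length xs = k \<and> distinct xs \<and> set xs \<subseteq> {..<n}}"

lemma stair_paramsD:
  assumes "(t, xs) \<in> stair_params n k"
  shows "t permutes {..<n}" "length xs = k" "distinct xs" "set xs \<subseteq> {..<n}" "k \<le> n"
  using assms unfolding stair_params_def
  by auto (metis card_lessThan card_mono distinct_card finite_lessThan)

lemma weakly_precedes_set: "weakly_precedes xs x y \<Longrightarrow> x \<in> set xs \<and> y \<in> set xs"
  unfolding weakly_precedes_def by (metis le_less_trans nth_mem)

lemma stair_le_refl: "stair_le xs x x"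
  unfolding stair_le_def by simp

lemma stair_le_notin_left: "x \<notin> set xs \<Longrightarrow> stair_le xs x y \<longleftrightarrow> y = x"
  unfolding stair_le_def weakly_precedes_def by auto

lemma stair_le_notin_right: "y \<notin> set xs \<Longrightarrow> stair_le xs x y \<longleftrightarrow> x = y \<or> x \<in> set xs"
  unfolding stair_le_def weakly_precedes_def by auto

lemma stair_le_nth_left:
  assumes "distinct xs" and "a < length xs"
  shows "stair_le xs (xs ! a) y \<longleftrightarrow> y \<notin> set xs \<or> (\<exists>b. a \<le> b \<and> b < length xs \<and> y = xs ! b)"
  using assms unfolding stair_le_def weakly_precedes_def
  by (auto simp: nth_eq_iff_index_eq)

lemma stair_le_nth_right:
  assumes "distinct xs" and "b < length xs"
  shows "stair_le xs x (xs ! b) \<longleftrightarrow> (\<exists>a \<le> b. x = xs ! a)"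
  using assms unfolding stair_le_def weakly_precedes_def
  by (auto simp: nth_eq_iff_index_eq)

lemma stair_le_antisym:
  assumes d: "distinct xs" and "stair_le xs x y" and "stair_le xs y x"
  shows "x = y"
proof (rule ccontr)
  assume "x \<noteq> y"
  with assms(2,3) have "weakly_precedes xs x y" and "weakly_precedes xs y x"
    unfolding stair_le_def by (metis weakly_precedes_set)+
  then obtain a b a' b' where ab: "a \<le> b" "b < length xs" "x = xs ! a" "y = xs ! b"
    and ab': "a' \<le> b'" "b' < length xs" "y = xs ! a'" "x = xs ! b'"
    unfolding weakly_precedes_def by blast
  have "a = b'" using nth_eq_iff_index_eq[OF d, of a b'] ab ab' by simp
  moreover have "b = a'" using nth_eq_iff_index_eq[OF d, of b a'] ab ab' by simp
  ultimately show False using ab ab' \<open>x \<noteq> y\<close> by simp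
qed

lemma stair_le_map:
  assumes "inj f"
  shows "stair_le (map f xs) (f x) (f y) \<longleftrightarrow> stair_le xs x y"
proof -
  have "weakly_precedes (map f xs) (f x) (f y) \<longleftrightarrow>
      (\<exists>a b. a \<le> b \<and> b < length xs \<and> f x = f (xs ! a) \<and> f y = f (xs ! b))"
    unfolding weakly_precedes_def by (metis le_less_trans length_map nth_map)
  also have "\<dots> \<longleftrightarrow> weakly_precedes xs x y"
    unfolding weakly_precedes_def inj_eq[OF assms] ..
  finally have "weakly_precedes (map f xs) (f x) (f y) \<longleftrightarrow> weakly_precedes xs x y" .
  moreover have "f z \<in> set (map f xs) \<longleftrightarrow> z \<in> set xs" for z
    using inj_image_mem_iff[OF assms] by simp
  ultimately show ?thesis
    unfolding stair_le_def inj_eq[OF assms] by simp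
qed

lemma stair_mat_carrier [simp]: "stair_mat n t xs \<in> carrier_mat n n"
  unfolding stair_mat_def by simp

lemma stair_mat_dims [simp]: "dim_row (stair_mat n t xs) = n" "dim_col (stair_mat n t xs) = n"
  unfolding stair_mat_def by simp_all

lemma stair_mat_index:
  "i < n \<Longrightarrow> j < n \<Longrightarrow> stair_mat n t xs $$ (i, j) = (if stair_le xs i (t j) then 1 else 0)"
  unfolding stair_mat_def by simp

lemma stair_mat_index_eq_1:
  "i < n \<Longrightarrow> j < n \<Longrightarrow> stair_mat n t xs $$ (i, j) = 1 \<longleftrightarrow> stair_le xs i (t j)"
  unfolding stair_mat_def by simp

lemma act_stair_mat:
  assumes p: "p permutes {..<n}" and s: "s permutes {..<n}"
  shows "act n p s (stair_mat n t xs) = stair_mat n (p \<circ> t \<circ> inv s) (map p xs)"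
proof (rule eq_matI)
  fix i j assume "i < dim_row (stair_mat n (p \<circ> t \<circ> inv s) (map p xs))"
    and "j < dim_col (stair_mat n (p \<circ> t \<circ> inv s) (map p xs))"
  then have i: "i < n" and j: "j < n" by (auto simp: stair_mat_def)
  have "act n p s (stair_mat n t xs) $$ (i, j) = stair_mat n t xs $$ (inv p i, inv s j)"
    by (rule act_index[OF p s stair_mat_carrier i j])
  also have "\<dots> = (if stair_le (map p xs) (p (inv p i)) (p (t (inv s j))) then 1 else 0)"
    using stair_mat_index permutes_lessThan_inv_less[OF p i] permutes_lessThan_inv_less[OF s j]
      stair_le_map[OF permutes_inj[OF p]] by simp
  also have "\<dots> = stair_mat n (p \<circ> t \<circ> inv s) (map p xs) $$ (i, j)"
    using stair_mat_index[OF i j] permutes_inverses(1)[OF p] by simp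
  finally show "act n p s (stair_mat n t xs) $$ (i, j)
      = stair_mat n (p \<circ> t \<circ> inv s) (map p xs) $$ (i, j)" .
qed (auto simp: act_def stair_mat_def perm_mat_def)

lemma stair_params_act:
  assumes p: "p permutes {..<n}" and s: "s permutes {..<n}" and ps: "(t, xs) \<in> stair_params n k"
  shows "(p \<circ> t \<circ> inv s, map p xs) \<in> stair_params n k"
proof -
  note ps = stair_paramsD[OF ps]
  have "p \<circ> t \<circ> inv s permutes {..<n}"
    using p s ps(1) by (intro permutes_compose permutes_inv)
  moreover have "distinct (map p xs)"
    using ps(3) permutes_inj[OF p] by (simp add: distinct_map inj_on_def)
  moreover have "set (map p xs) \<subseteq> {..<n}"
    using ps(4) permutes_lessThan_less[OF p] by auto
  ultimately show ?thesis using ps(2) unfolding stair_params_def by simp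
qed

lemma row_sum_stair_mat:
  assumes "t permutes {..<n}" and "i < n"
  shows "row_sum (stair_mat n t xs) i = card {y. y < n \<and> stair_le xs i y}"
proof -
  have "{j. j < dim_col (stair_mat n t xs) \<and> stair_mat n t xs $$ (i, j) = 1}
      = {j. j < n \<and> stair_le xs i (t j)}"
    using stair_mat_index_eq_1[OF assms(2)] by auto
  then show ?thesis
    unfolding row_sum_def using card_filter_lessThan_permutes[OF assms(1)] by simp
qed

lemma col_sum_stair_mat:
  assumes "j < n"
  shows "col_sum (stair_mat n t xs) j = card {i. i < n \<and> stair_le xs i (t j)}"
proof -
  have "{i. i < dim_row (stair_mat n t xs) \<and> stair_mat n t xs $$ (i, j) = 1}
      = {i. i < n \<and> stair_le xs i (t j)}"
    using stair_mat_index_eq_1[OF _ assms] by auto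
  then show ?thesis unfolding col_sum_def by simp
qed

lemma row_sum_stair_mat_heavy:
  assumes ps: "(t, xs) \<in> stair_params n k" and a: "a < k"
  shows "row_sum (stair_mat n t xs) (xs ! a) = n - a"
proof -
  note ps = stair_paramsD[OF ps]
  have "{y. y < n \<and> stair_le xs (xs ! a) y} = ({..<n} - set xs) \<union> (!) xs ` {a..<k}"
    using stair_le_nth_left[OF ps(3), of a] ps(2,4) a
    by (auto intro!: nth_less_if_subset_lessThan[OF ps(2,4)])
  moreover have "card (({..<n} - set xs) \<union> (!) xs ` {a..<k}) = (n - k) + (k - a)"
  proof -
    have "card ({..<n} - set xs) = n - k"
      using ps by (simp add: card_Diff_subset distinct_card)
    moreover have "card ((!) xs ` {a..<k}) = k - a"
      using ps(2,3) by (simp add: card_image inj_on_nth)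
    moreover have "({..<n} - set xs) \<inter> (!) xs ` {a..<k} = {}"
      using ps(2) by auto
    ultimately show ?thesis by (simp add: card_Un_disjoint)
  qed
  ultimately show ?thesis
    using row_sum_stair_mat[OF ps(1)] ps(2,4) a ps(5) by (simp add: subset_iff)
qed

lemma row_sum_stair_mat_light:
  assumes "t permutes {..<n}" and "i < n" and "i \<notin> set xs"
  shows "row_sum (stair_mat n t xs) i = 1"
proof -
  have "{y. y < n \<and> stair_le xs i y} = {i}"
    using stair_le_notin_left[OF assms(3)] assms(2) by auto
  then show ?thesis using row_sum_stair_mat[OF assms(1,2)] by simp
qed

lemma col_sum_stair_mat_light:
  assumes ps: "(t, xs) \<in> stair_params n k" and j: "j < n" and tj: "t j \<notin> set xs"
  shows "col_sum (stair_mat n t xs) j = Suc k"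
proof -
  note ps = stair_paramsD[OF ps]
  have "{i. i < n \<and> stair_le xs i (t j)} = insert (t j) (set xs)"
    using stair_le_notin_right[OF tj] permutes_lessThan_less[OF ps(1) j] ps(4) by auto
  then show ?thesis using col_sum_stair_mat[OF j] tj ps by (simp add: distinct_card)
qed

lemma col_sum_stair_mat_heavy:
  assumes ps: "(t, xs) \<in> stair_params n k" and j: "j < n" and b: "b < k" and tj: "t j = xs ! b"
  shows "col_sum (stair_mat n t xs) j = Suc b"
proof -
  note ps = stair_paramsD[OF ps]
  have "{i. i < n \<and> stair_le xs i (t j)} = (!) xs ` {..b}"
    using stair_le_nth_right[OF ps(3), of b] tj ps(2,4) b
    by (auto intro!: nth_less_if_subset_lessThan[OF ps(2,4)])
  moreover have "card ((!) xs ` {..b}) = Suc b"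
    using ps(2,3) b by (subst card_image) (auto intro: inj_on_subset[OF inj_on_nth])
  ultimately show ?thesis using col_sum_stair_mat[OF j] by simp
qed

lemma eta_stair_mat:
  assumes ps: "(t, xs) \<in> stair_params n k"
  shows "eta (stair_mat n t xs) = H_row_sums n k"
proof -
  note ps' = stair_paramsD[OF ps]
  have "mset (map (row_sum (stair_mat n t xs)) [0..<n])
      = mset (map (\<lambda>i. n - i) [0..<length xs]) + replicate_mset (n - length xs) 1"
    by (rule mset_map_upt_split[OF ps'(3,4)])
      (use row_sum_stair_mat_heavy[OF ps] row_sum_stair_mat_light[OF ps'(1)] ps'(2) in auto)
  moreover have "sorted (rev (H_row_sums n k))"
    using ps'(5) unfolding sorted_rev_iff_nth_mono by (auto simp: nth_append)
  ultimately show ?thesis unfolding eta_def using ps'(2) by (intro rev_sort_eqI) auto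
qed

lemma theta_stair_mat:
  assumes ps: "(t, xs) \<in> stair_params n k"
  shows "theta (stair_mat n t xs) = H_col_sums n k"
proof -
  note ps' = stair_paramsD[OF ps]
  have t': "inv t permutes {..<n}" using ps'(1) by (rule permutes_inv)
  have "mset (map (col_sum (stair_mat n t xs)) [0..<n])
      = mset (map (col_sum (stair_mat n t xs) \<circ> inv t) [0..<n])"
    by (rule mset_map_upt_permutes[OF t', symmetric])
  also have "\<dots> = mset (map Suc [0..<k]) + replicate_mset (n - k) (Suc k)"
  proof (subst mset_map_upt_split[OF ps'(3,4)])
    fix a assume "a < length xs"
    then show "(col_sum (stair_mat n t xs) \<circ> inv t) (xs ! a) = Suc a"
      using col_sum_stair_mat_heavy[OF ps permutes_lessThan_inv_less[OF ps'(1)]]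
        nth_less_if_subset_lessThan[OF ps'(2,4)] permutes_inverses(1)[OF ps'(1)] ps'(2) by simp
  next
    fix i assume "i < n" and "i \<notin> set xs"
    then show "(col_sum (stair_mat n t xs) \<circ> inv t) i = Suc k"
      using col_sum_stair_mat_light[OF ps permutes_lessThan_inv_less[OF ps'(1)]]
        permutes_inverses(1)[OF ps'(1)] by simp
  qed (use ps'(2) in simp)
  also have "\<dots> = mset (H_col_sums n k)"
  proof -
    have "map (\<lambda>i. k - i) [0..<k] = rev (map Suc [0..<k])"
      by (rule nth_equalityI) (auto simp: rev_nth)
    then show ?thesis by simp
  qed
  moreover have "sorted (rev (H_col_sums n k))"
    unfolding sorted_rev_iff_nth_mono by (auto simp: nth_append)
  ultimately show ?thesis unfolding theta_def by (intro rev_sort_eqI) auto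
qed

lemma det_stair_mat_id: "det (stair_mat n id [0..<k]) = 1"
proof -
  have "upper_triangular (stair_mat n id [0..<k])"
  proof (rule upper_triangularI)
    fix i j assume "j < i" and "i < dim_row (stair_mat n id [0..<k])"
    moreover from \<open>j < i\<close> have "\<not> stair_le [0..<k] i j"
      unfolding stair_le_def weakly_precedes_def by auto
    ultimately show "stair_mat n id [0..<k] $$ (i, j) = 0" by (simp add: stair_mat_index)
  qed
  then have "det (stair_mat n id [0..<k]) = (\<Prod>i = 0..<n. stair_mat n id [0..<k] $$ (i, i))"
    by (simp add: det_upper_triangular[OF _ stair_mat_carrier] prod_list_diag_prod)
  also have "\<dots> = 1" by (rule prod.neutral) (simp add: stair_mat_index stair_le_refl)
  finally show ?thesis .
qed

lemma stair_mat_in_H: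
  assumes ps: "(t, xs) \<in> stair_params n k"
  shows "stair_mat n t xs \<in> H n k"
proof -
  note ps' = stair_paramsD[OF ps]
  obtain p where p: "p permutes {..<n}" and xs: "map p [0..<k] = xs"
    using ex_permutes_map_upt[OF ps'(3,4)] ps'(2) by blast
  define u where "u = inv p \<circ> t"
  have u: "u permutes {..<n}" unfolding u_def using p ps'(1)
    by (intro permutes_compose permutes_inv)
  have "inv (inv u) = u" using u by (intro inv_inv_eq permutes_bij)
  then have "act n p (inv u) (stair_mat n id [0..<k]) = stair_mat n t xs"
    using act_stair_mat[OF p permutes_inv[OF u]] xs permutes_inverses(1)[OF p]
    by (simp add: u_def comp_def)
  moreover have "invertible_mat (act n p (inv u) (stair_mat n id [0..<k]))"
    using invertible_act[OF p permutes_inv[OF u] stair_mat_carrier] det_stair_mat_id by simp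
  ultimately show ?thesis
    unfolding H_def GL2_def using eta_stair_mat[OF ps] theta_stair_mat[OF ps] by auto
qed

lemma eq_nth_if_row_sum_stair_mat:
  assumes ps: "(t, xs) \<in> stair_params n k" and a: "a < k" and i: "i < n"
    and rs: "row_sum (stair_mat n t xs) i = n - a"
  shows "i = xs ! a"
proof -
  note ps' = stair_paramsD[OF ps]
  have "i \<in> set xs"
  proof (rule ccontr)
    assume i': "i \<notin> set xs"
    then have "n - a = 1" using row_sum_stair_mat_light[OF ps'(1) i] rs by simp
    then have "k = n" using a ps'(5) by linarith
    then have "set xs = {..<n}" using ps' by (intro card_subset_eq) (auto simp: distinct_card)
    then show False using i i' by simp
  qed
  then obtain b where b: "b < k" "i = xs ! b" using ps'(2) by (metis in_set_conv_nth)
  then have "n - b = n - a" using row_sum_stair_mat_heavy[OF ps b(1)] rs by simp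
  then have "b = a" using a b(1) ps'(5) by linarith
  then show ?thesis using b(2) by simp
qed

lemma stair_mat_inj:
  assumes ps: "(t, xs) \<in> stair_params n k" and ps': "(t', xs') \<in> stair_params n k"
    and eq: "stair_mat n t xs = stair_mat n t' xs'"
  shows "t = t'" and "xs = xs'"
proof -
  note ps = stair_paramsD[OF ps] and ps' = stair_paramsD[OF ps']
  show "xs = xs'"
  proof (rule nth_equalityI)
    fix a assume "a < length xs"
    then have "a < k" using ps(2) by simp
    have "row_sum (stair_mat n t xs) (xs' ! a) = n - a"
      using row_sum_stair_mat_heavy[OF assms(2) \<open>a < k\<close>] eq by simp
    then show "xs ! a = xs' ! a"
      using eq_nth_if_row_sum_stair_mat[OF assms(1) \<open>a < k\<close>]
        nth_less_if_subset_lessThan[OF ps'(2,4) \<open>a < k\<close>] by simp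
  qed (use ps ps' in simp)
  show "t = t'"
  proof
    fix j show "t j = t' j"
    proof (cases "j < n")
      case True
      have iff: "stair_le xs i (t j) \<longleftrightarrow> stair_le xs i (t' j)" if "i < n" for i
        using stair_mat_index_eq_1[OF that True, of t xs]
          stair_mat_index_eq_1[OF that True, of t' xs']
          eq \<open>xs = xs'\<close> by simp
      have "stair_le xs (t j) (t' j)"
        using iff[OF permutes_lessThan_less[OF ps(1) True]] stair_le_refl[of xs "t j"] by blast
      moreover have "stair_le xs (t' j) (t j)"
        using iff[OF permutes_lessThan_less[OF ps'(1) True]] stair_le_refl[of xs "t' j"] by blast
      ultimately show ?thesis by (rule stair_le_antisym[OF ps(3)])
    next
      case False
      then show ?thesis using permutes_not_in[OF ps(1)] permutes_not_in[OF ps'(1)] by simp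
    qed
  qed
qed

section \<open>The matrices in H are staircase matrices\<close>

locale H_matrix =
  fixes n k :: nat and A :: "bit mat"
  assumes k_le_n: "k \<le> n" and A_in_H: "A \<in> H n k"
begin

lemma A_carrier: "A \<in> carrier_mat n n" and A_invertible: "invertible_mat A"
  using A_in_H unfolding H_def GL2_def by auto

lemma A_dims [simp]: "dim_row A = n" "dim_col A = n"
  using A_carrier by auto

lemma count_row_sums:
  "card {i. i < n \<and> row_sum A i = v}
     = count (mset (H_row_sums n k)) v"
proof -
  have "eta A = H_row_sums n k" using A_in_H unfolding H_def by simp
  then have "mset (map (row_sum A) [0..<n]) = mset (H_row_sums n k)"
    unfolding eta_def by (metis A_dims(1) mset_rev mset_sort)
  then show ?thesis unfolding count_mset_map_upt[symmetric] by (rule arg_cong)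
qed

lemma count_col_sums:
  "card {j. j < n \<and> col_sum A j = v}
     = count (mset (H_col_sums n k)) v"
proof -
  have "theta A = H_col_sums n k" using A_in_H unfolding H_def by simp
  then have "mset (map (col_sum A) [0..<n]) = mset (H_col_sums n k)"
    unfolding theta_def by (metis A_dims(2) mset_rev mset_sort)
  then show ?thesis unfolding count_mset_map_upt[symmetric] by (rule arg_cong)
qed

lemma ex1_heavy_row:
  assumes "a < k"
  shows "\<exists>!i. i < n \<and> row_sum A i = n - a"
proof (intro ex1_if_card_Collect_eq_1)
  have "card {i. i < n \<and> row_sum A i = n - a}
      = count (mset (map (\<lambda>i. n - i) [0..<k])) (n - a) + count (replicate_mset (n - k) 1) (n - a)"
    unfolding count_row_sums by (simp only: mset_append count_union mset_replicate)
  also have "count (mset (map (\<lambda>i. n - i) [0..<k])) (n - a) = card {i. i < k \<and> n - i = n - a}"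
    by (rule count_mset_map_upt)
  also have "{i. i < k \<and> n - i = n - a} = {a}" using assms k_le_n by auto
  also have "count (replicate_mset (n - k) 1) (n - a) = 0" using assms k_le_n by auto
  finally show "card {i. i < n \<and> row_sum A i = n - a} = 1" by simp
qed

lemma ex1_stair_col:
  assumes "b < k"
  shows "\<exists>!j. j < n \<and> col_sum A j = Suc b"
proof (intro ex1_if_card_Collect_eq_1)
  have "card {j. j < n \<and> col_sum A j = Suc b}
      = count (replicate_mset (n - k) (k + 1)) (Suc b)
        + count (mset (map (\<lambda>i. k - i) [0..<k])) (Suc b)"
    unfolding count_col_sums by (simp only: mset_append count_union mset_replicate)
  also have "count (mset (map (\<lambda>i. k - i) [0..<k])) (Suc b) = card {i. i < k \<and> k - i = Suc b}"
    by (rule count_mset_map_upt)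
  also have "{i. i < k \<and> k - i = Suc b} = {k - Suc b}" using assms by auto
  also have "count (replicate_mset (n - k) (k + 1)) (Suc b) = 0" using assms by auto
  finally show "card {j. j < n \<and> col_sum A j = Suc b} = 1" by simp
qed

lemma row_sum_in_eta:
  assumes "i < n"
  shows "row_sum A i \<in> set (H_row_sums n k)"
proof -
  have "card {i'. i' < n \<and> row_sum A i' = row_sum A i} \<noteq> 0"
    using assms by (auto simp: card_eq_0_iff)
  then have "row_sum A i \<in># mset (H_row_sums n k)"
    by (simp only: count_row_sums count_eq_zero_iff not_not)
  then show ?thesis by (simp only: set_mset_mset)
qed

lemma col_sum_in_theta:
  assumes "j < n"
  shows "col_sum A j \<in> set (H_col_sums n k)"
proof -
  have "card {j'. j' < n \<and> col_sum A j' = col_sum A j} \<noteq> 0"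
    using assms by (auto simp: card_eq_0_iff)
  then have "col_sum A j \<in># mset (H_col_sums n k)"
    by (simp only: count_col_sums count_eq_zero_iff not_not)
  then show ?thesis by (simp only: set_mset_mset)
qed

lemma row_sum_light:
  assumes "i < n" and "\<And>a. a < k \<Longrightarrow> row_sum A i \<noteq> n - a"
  shows "row_sum A i = 1"
proof -
  from row_sum_in_eta[OF assms(1)] have "(\<exists>a<k. row_sum A i = n - a) \<or> row_sum A i = 1" by auto
  then show ?thesis using assms(2) by blast
qed

lemma col_sum_light:
  assumes "j < n" and "\<And>b. b < k \<Longrightarrow> col_sum A j \<noteq> Suc b"
  shows "col_sum A j = Suc k"
proof -
  have "col_sum A j \<noteq> k - a" if "a < k" for a
  proof -
    have "k - Suc a < k" and "k - a = Suc (k - Suc a)" using that by arith+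
    then show ?thesis using assms(2)[of "k - Suc a"] by simp
  qed
  moreover from col_sum_in_theta[OF assms(1)]
  have "col_sum A j = Suc k \<or> (\<exists>a<k. col_sum A j = k - a)"
    by auto
  ultimately show ?thesis by blast
qed

definition heavy_row :: "nat \<Rightarrow> nat" where
  "heavy_row a = (THE i. i < n \<and> row_sum A i = n - a)"

lemma heavy_rowD: "a < k \<Longrightarrow> heavy_row a < n \<and> row_sum A (heavy_row a) = n - a"
  unfolding heavy_row_def by (rule theI'[OF ex1_heavy_row])

lemma heavy_row_unique: "a < k \<Longrightarrow> i < n \<Longrightarrow> row_sum A i = n - a \<Longrightarrow> i = heavy_row a"
  unfolding heavy_row_def by (rule the1_equality[OF ex1_heavy_row, symmetric]) auto

definition heavy_rows :: "nat list" where
  "heavy_rows = map heavy_row [0..<k]"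

lemma length_heavy_rows [simp]: "length heavy_rows = k"
  unfolding heavy_rows_def by simp

lemma row_sum_heavy_rows: "a < k \<Longrightarrow> row_sum A (heavy_rows ! a) = n - a"
  unfolding heavy_rows_def using heavy_rowD by simp

lemma set_heavy_rows_subset: "set heavy_rows \<subseteq> {..<n}"
  unfolding heavy_rows_def using heavy_rowD by auto

lemma distinct_heavy_rows: "distinct heavy_rows"
proof -
  have "inj_on heavy_row {0..<k}"
  proof (rule inj_onI)
    fix a a' assume "a \<in> {0..<k}" "a' \<in> {0..<k}" "heavy_row a = heavy_row a'"
    then have "n - a = n - a'" using heavy_rowD[of a] heavy_rowD[of a'] by simp
    then show "a = a'" using \<open>a \<in> {0..<k}\<close> \<open>a' \<in> {0..<k}\<close> k_le_n by simp
  qed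
  then show ?thesis unfolding heavy_rows_def by (simp add: distinct_map)
qed

lemma row_sum_light_row:
  assumes "i < n" and "i \<notin> set heavy_rows"
  shows "row_sum A i = 1"
proof (rule row_sum_light[OF assms(1)])
  fix a assume "a < k"
  then have "heavy_rows ! a \<in> set heavy_rows" by simp
  then show "row_sum A i \<noteq> n - a"
    using heavy_row_unique[OF \<open>a < k\<close> assms(1)] assms(2) \<open>a < k\<close> by (auto simp: heavy_rows_def)
qed

definition stair_col :: "nat \<Rightarrow> nat" where
  "stair_col b = (THE j. j < n \<and> col_sum A j = Suc b)"

lemma stair_colD: "b < k \<Longrightarrow> stair_col b < n \<and> col_sum A (stair_col b) = Suc b"
  unfolding stair_col_def by (rule theI'[OF ex1_stair_col])

lemma stair_col_unique: "b < k \<Longrightarrow> j < n \<Longrightarrow> col_sum A j = Suc b \<Longrightarrow> j = stair_col b"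
  unfolding stair_col_def by (rule the1_equality[OF ex1_stair_col, symmetric]) auto

lemma inj_on_stair_col: "inj_on stair_col {..<k}"
  by (rule inj_onI) (metis stair_colD lessThan_iff nat.inject)

definition light_rows :: "nat set" where
  "light_rows = {..<n} - set heavy_rows"

definition light_col :: "nat \<Rightarrow> nat" where
  "light_col i = (THE j. j < n \<and> A $$ (i, j) = 1)"

lemma light_colD:
  assumes "i \<in> light_rows"
  shows "light_col i < n" and "j < n \<Longrightarrow> A $$ (i, j) = 1 \<longleftrightarrow> j = light_col i"
proof -
  have "card {j. j < n \<and> A $$ (i, j) = 1} = 1"
    using row_sum_light_row assms unfolding light_rows_def row_sum_def by simp
  then have ex1: "\<exists>!j. j < n \<and> A $$ (i, j) = 1" by (rule ex1_if_card_Collect_eq_1)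
  show "light_col i < n" unfolding light_col_def using theI'[OF ex1] by simp
  show "j < n \<Longrightarrow> A $$ (i, j) = 1 \<longleftrightarrow> j = light_col i"
    unfolding light_col_def using theI'[OF ex1] the1_equality[OF ex1] by blast
qed

lemma inj_on_light_col: "inj_on light_col light_rows"
proof (rule inj_onI)
  fix i i' assume i: "i \<in> light_rows" and i': "i' \<in> light_rows" and eq: "light_col i = light_col i'"
  have "A $$ (i, j) = A $$ (i', j)" if "j < n" for j
    using light_colD(2)[OF i that] light_colD(2)[OF i' that] eq by (metis bit_not_one_iff)
  then show "i = i'"
    using invertible_mat_rows_distinct[OF A_carrier A_invertible] i i' unfolding light_rows_def
    by blast
qed

definition light_cols :: "nat set" where
  "light_cols = light_col ` light_rows"

definition stair_cols :: "nat set" where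
  "stair_cols = stair_col ` {..<k}"

lemma card_light_rows: "card light_rows = n - k"
  unfolding light_rows_def using set_heavy_rows_subset distinct_heavy_rows
  by (simp add: card_Diff_subset distinct_card)

lemma light_cols_subset: "light_cols \<subseteq> {..<n}"
  unfolding light_cols_def using light_colD(1) by auto

lemma card_light_cols: "card light_cols = n - k"
  unfolding light_cols_def using inj_on_light_col card_light_rows by (simp add: card_image)

lemma card_stair_cols: "card stair_cols = k"
  unfolding stair_cols_def using inj_on_stair_col by (simp add: card_image)

lemma ones_in_heavy_rows:
  assumes "j < n" and "j \<notin> light_cols" and "i < n" and "A $$ (i, j) = 1"
  shows "i \<in> set heavy_rows"
proof (rule ccontr)
  assume "i \<notin> set heavy_rows"
  then have "i \<in> light_rows" unfolding light_rows_def using assms(3) by simp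
  moreover from this have "j = light_col i" using light_colD(2) assms(1,4) by blast
  ultimately show False using assms(2) unfolding light_cols_def by simp
qed

lemma stair_col_if_notin_light_cols:
  assumes "j < n" and "j \<notin> light_cols"
  shows "j \<in> stair_cols"
proof -
  have "{i. i < n \<and> A $$ (i, j) = 1} \<subseteq> set heavy_rows"
    using ones_in_heavy_rows[OF assms] by blast
  then have "col_sum A j \<le> k"
    unfolding col_sum_def using card_mono[OF finite_set] distinct_card[OF distinct_heavy_rows]
    by fastforce
  then obtain b where "b < k" and "col_sum A j = Suc b"
    using col_sum_light[OF assms(1)] by fastforce
  then show ?thesis unfolding stair_cols_def using stair_col_unique assms(1) by blast
qed

lemma stair_cols_eq: "stair_cols = {..<n} - light_cols"
proof -
  have sub: "{..<n} - light_cols \<subseteq> stair_cols" using stair_col_if_notin_light_cols by blast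
  have "card ({..<n} - light_cols) = card stair_cols"
    using card_light_cols card_stair_cols light_cols_subset k_le_n
    by (simp add: card_Diff_subset finite_subset)
  then show ?thesis by (rule card_subset_eq[rotated, OF sub, symmetric]) (simp add: stair_cols_def)
qed

lemma ones_in_light_col:
  assumes i: "i \<in> light_rows"
  shows "{i'. i' < n \<and> A $$ (i', light_col i) = 1} = insert i (set heavy_rows)"
proof -
  have sub: "{i'. i' < n \<and> A $$ (i', light_col i) = 1} \<subseteq> insert i (set heavy_rows)"
  proof
    fix i' assume i': "i' \<in> {i'. i' < n \<and> A $$ (i', light_col i) = 1}"
    show "i' \<in> insert i (set heavy_rows)"
    proof (cases "i' \<in> set heavy_rows")
      case False
      from i' have "i' < n" and one: "A $$ (i', light_col i) = 1" by blast+
      with False have "i' \<in> light_rows" unfolding light_rows_def by blast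
      moreover from this have "light_col i = light_col i'"
        using light_colD(2)[OF _ light_colD(1)[OF i]] one by blast
      ultimately show ?thesis using inj_onD[OF inj_on_light_col _ i] by simp
    qed simp
  qed
  have "light_col i \<notin> stair_cols" using i stair_cols_eq unfolding light_cols_def by simp
  then have "col_sum A (light_col i) = Suc k"
    using col_sum_light[OF light_colD(1)[OF i]] stair_col_unique[OF _ light_colD(1)[OF i]]
    unfolding stair_cols_def by blast
  moreover have "i \<notin> set heavy_rows" using i unfolding light_rows_def by simp
  ultimately have "card {i'. i' < n \<and> A $$ (i', light_col i) = 1}
      = card (insert i (set heavy_rows))"
    using distinct_heavy_rows unfolding col_sum_def by (simp add: distinct_card)
  then show ?thesis by (rule card_subset_eq[rotated, OF sub]) simp
qed

lemma heavy_row_light_col: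
  assumes "a < k" and "j \<in> light_cols"
  shows "A $$ (heavy_rows ! a, j) = 1"
proof -
  obtain i where i: "i \<in> light_rows" and j: "j = light_col i" using assms(2)
    unfolding light_cols_def by blast
  have "heavy_rows ! a \<in> insert i (set heavy_rows)" using assms(1) by simp
  then show ?thesis using ones_in_light_col[OF i] j by blast
qed

definition heavy_block :: "nat \<Rightarrow> nat \<Rightarrow> bool" where
  "heavy_block a b \<longleftrightarrow> A $$ (heavy_rows ! a, stair_col b) = 1"

lemma card_heavy_block_row:
  assumes a: "a < k"
  shows "card {b. b < k \<and> heavy_block a b} = k - a"
proof -
  let ?B = "stair_col ` {b. b < k \<and> heavy_block a b}"
  have "{j. j < n \<and> A $$ (heavy_rows ! a, j) = 1} = light_cols \<union> ?B"
  proof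
    show "{j. j < n \<and> A $$ (heavy_rows ! a, j) = 1} \<subseteq> light_cols \<union> ?B"
      using stair_col_if_notin_light_cols unfolding stair_cols_def heavy_block_def by blast
    show "light_cols \<union> ?B \<subseteq> {j. j < n \<and> A $$ (heavy_rows ! a, j) = 1}"
      using heavy_row_light_col[OF a] light_cols_subset stair_colD unfolding heavy_block_def by auto
  qed
  moreover have "light_cols \<inter> ?B = {}" using stair_cols_eq unfolding stair_cols_def by blast
  moreover have "card ?B = card {b. b < k \<and> heavy_block a b}"
    by (rule card_image) (rule inj_on_subset[OF inj_on_stair_col], blast)
  moreover have "finite light_cols" using light_cols_subset finite_subset by blast
  ultimately have "n - a = (n - k) + card {b. b < k \<and> heavy_block a b}"
    using row_sum_heavy_rows[OF a] card_light_cols unfolding row_sum_def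
    by (simp add: card_Un_disjoint)
  then show ?thesis using a k_le_n by simp
qed

lemma card_heavy_block_col:
  assumes b: "b < k"
  shows "card {a. a < k \<and> heavy_block a b} = Suc b"
proof -
  have notin: "stair_col b \<notin> light_cols" using stair_cols_eq b unfolding stair_cols_def by blast
  have "{i. i < n \<and> A $$ (i, stair_col b) = 1} = (!) heavy_rows ` {a. a < k \<and> heavy_block a b}"
  proof
    show "{i. i < n \<and> A $$ (i, stair_col b) = 1} \<subseteq> (!) heavy_rows ` {a. a < k \<and> heavy_block a b}"
      using ones_in_heavy_rows[OF conjunct1[OF stair_colD[OF b]] notin]
      unfolding heavy_block_def by (fastforce simp: in_set_conv_nth)
    show "(!) heavy_rows ` {a. a < k \<and> heavy_block a b} \<subseteq> {i. i < n \<and> A $$ (i, stair_col b) = 1}"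
      using nth_less_if_subset_lessThan[OF length_heavy_rows set_heavy_rows_subset]
      unfolding heavy_block_def by auto
  qed
  moreover have "inj_on ((!) heavy_rows) {a. a < k \<and> heavy_block a b}"
    using distinct_heavy_rows by (simp add: inj_on_nth)
  ultimately show ?thesis using stair_colD[OF b] unfolding col_sum_def by (simp add: card_image)
qed

lemma heavy_block_iff: "a < k \<Longrightarrow> b < k \<Longrightarrow> heavy_block a b \<longleftrightarrow> a \<le> b"
  by (rule staircase_iff_le[OF card_heavy_block_row card_heavy_block_col])

definition col_perm :: "nat \<Rightarrow> nat" where
  "col_perm j =
     (if j \<in> light_cols then the_inv_into light_rows light_col j
      else if j \<in> stair_cols then heavy_rows ! the_inv_into {..<k} stair_col j
      else j)"

lemma col_perm_light_col: "i \<in> light_rows \<Longrightarrow> col_perm (light_col i) = i"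
  unfolding col_perm_def light_cols_def by (simp add: the_inv_into_f_f[OF inj_on_light_col])

lemma col_perm_stair_col: "b < k \<Longrightarrow> col_perm (stair_col b) = heavy_rows ! b"
proof -
  assume "b < k"
  then have "stair_col b \<in> stair_cols" and "stair_col b \<notin> light_cols"
    using stair_cols_eq unfolding stair_cols_def by auto
  then show ?thesis
    unfolding col_perm_def using the_inv_into_f_f[OF inj_on_stair_col] \<open>b < k\<close> by simp
qed

lemma col_perm_permutes: "col_perm permutes {..<n}"
proof (rule bij_imp_permutes)
  have "bij_betw light_col light_rows light_cols"
    unfolding light_cols_def using inj_on_light_col by (simp add: bij_betw_def)
  then have "bij_betw (the_inv_into light_rows light_col) light_cols light_rows"
    by (rule bij_betw_the_inv_into)
  then have light: "bij_betw col_perm light_cols light_rows"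
    by (rule bij_betw_cong[THEN iffD1, rotated]) (simp add: col_perm_def)
  have "bij_betw stair_col {..<k} stair_cols"
    unfolding stair_cols_def using inj_on_stair_col by (simp add: bij_betw_def)
  then have "bij_betw ((!) heavy_rows \<circ> the_inv_into {..<k} stair_col) stair_cols (set heavy_rows)"
    using bij_betw_the_inv_into bij_betw_nth[OF distinct_heavy_rows] bij_betw_trans by fastforce
  then have stair: "bij_betw col_perm stair_cols (set heavy_rows)"
    by (rule bij_betw_cong[THEN iffD1, rotated]) (use stair_cols_eq in \<open>simp add: col_perm_def\<close>)
  have "light_rows \<inter> set heavy_rows = {}" unfolding light_rows_def by blast
  then have "bij_betw col_perm (light_cols \<union> stair_cols) (light_rows \<union> set heavy_rows)"
    by (rule bij_betw_combine[OF light stair])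
  moreover have "light_cols \<union> stair_cols = {..<n}" using stair_cols_eq light_cols_subset by blast
  moreover have "light_rows \<union> set heavy_rows = {..<n}"
    using set_heavy_rows_subset unfolding light_rows_def by blast
  ultimately show "bij_betw col_perm {..<n} {..<n}" by simp
next
  fix j assume "j \<notin> {..<n}"
  then show "col_perm j = j"
    using light_cols_subset stair_cols_eq unfolding col_perm_def by auto
qed

lemma A_index_eq_1_iff:
  assumes i: "i < n" and j: "j < n"
  shows "A $$ (i, j) = 1 \<longleftrightarrow> stair_le heavy_rows i (col_perm j)"
proof (cases "j \<in> light_cols")
  case True
  then obtain l where l: "l \<in> light_rows" and jl: "j = light_col l" unfolding light_cols_def
    by blast
  then have "l \<notin> set heavy_rows" unfolding light_rows_def by blast
  moreover have "A $$ (i, j) = 1 \<longleftrightarrow> i = l \<or> i \<in> set heavy_rows"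
    using ones_in_light_col[OF l] i jl by blast
  ultimately show ?thesis using col_perm_light_col[OF l] jl stair_le_notin_right by metis
next
  case False
  then obtain b where b: "b < k" and jb: "j = stair_col b"
    using stair_col_if_notin_light_cols[OF j] unfolding stair_cols_def by blast
  have "A $$ (i, j) = 1 \<longleftrightarrow> (\<exists>a \<le> b. i = heavy_rows ! a)"
  proof
    assume "A $$ (i, j) = 1"
    moreover from this obtain a where "a < k" and "i = heavy_rows ! a"
      using ones_in_heavy_rows[OF j False i] by (metis in_set_conv_nth length_heavy_rows)
    ultimately show "\<exists>a \<le> b. i = heavy_rows ! a"
      using heavy_block_iff[OF _ b] jb unfolding heavy_block_def by blast
  next
    assume "\<exists>a \<le> b. i = heavy_rows ! a"
    then show "A $$ (i, j) = 1"
      using heavy_block_iff[OF _ b] b jb unfolding heavy_block_def by fastforce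
  qed
  then show ?thesis
    using col_perm_stair_col[OF b] stair_le_nth_right[OF distinct_heavy_rows] b jb by simp
qed

lemma A_eq_stair_mat: "A = stair_mat n col_perm heavy_rows"
proof (rule eq_matI)
  fix i j assume "i < dim_row (stair_mat n col_perm heavy_rows)"
    and "j < dim_col (stair_mat n col_perm heavy_rows)"
  then have i: "i < n" and j: "j < n" by simp_all
  show "A $$ (i, j) = stair_mat n col_perm heavy_rows $$ (i, j)"
    using A_index_eq_1_iff[OF i j] stair_mat_index[OF i j] by (cases "A $$ (i, j)") auto
qed simp_all

lemma A_in_stair_mat_image: "A \<in> (\<lambda>(t, xs). stair_mat n t xs) ` stair_params n k"
  using A_eq_stair_mat col_perm_permutes distinct_heavy_rows set_heavy_rows_subset
  unfolding stair_params_def by force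

end

lemma H_eq_stair_mat_image:
  assumes "k \<le> n"
  shows "H n k = (\<lambda>(t, xs). stair_mat n t xs) ` stair_params n k"
proof
  show "H n k \<subseteq> (\<lambda>(t, xs). stair_mat n t xs) ` stair_params n k"
    using H_matrix.A_in_stair_mat_image[OF H_matrix.intro[OF assms]] by blast
  show "(\<lambda>(t, xs). stair_mat n t xs) ` stair_params n k \<subseteq> H n k"
    using stair_mat_in_H by auto
qed

section \<open>Fixed points of the action\<close>

lemma fixed_points_act_H:
  assumes "k \<le> n" and p: "p permutes {..<n}" and s: "s permutes {..<n}"
  shows "{A \<in> H n k. act n p s A = A}
    = (\<lambda>(t, xs). stair_mat n t xs) `
        {(t, xs) \<in> stair_params n k. p \<circ> t \<circ> inv s = t \<and> map p xs = xs}"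
proof (intro equalityI subsetI)
  fix A assume "A \<in> {A \<in> H n k. act n p s A = A}"
  then obtain t xs where ps: "(t, xs) \<in> stair_params n k" and A: "A = stair_mat n t xs"
    and "act n p s A = A"
    using H_eq_stair_mat_image[OF assms(1)] by auto
  then have "stair_mat n (p \<circ> t \<circ> inv s) (map p xs) = stair_mat n t xs"
    using act_stair_mat[OF p s] by simp
  then have "p \<circ> t \<circ> inv s = t" and "map p xs = xs"
    using stair_mat_inj[OF stair_params_act[OF p s ps] ps] by blast+
  then show "A \<in> (\<lambda>(t, xs). stair_mat n t xs) `
      {(t, xs) \<in> stair_params n k. p \<circ> t \<circ> inv s = t \<and> map p xs = xs}"
    using ps A by force
next
  fix A assume "A \<in> (\<lambda>(t, xs). stair_mat n t xs) `
      {(t, xs) \<in> stair_params n k. p \<circ> t \<circ> inv s = t \<and> map p xs = xs}"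
  then obtain t xs where "(t, xs) \<in> stair_params n k" "p \<circ> t \<circ> inv s = t" "map p xs = xs"
    and "A = stair_mat n t xs" by auto
  then show "A \<in> {A \<in> H n k. act n p s A = A}"
    using stair_mat_in_H act_stair_mat[OF p s] by simp
qed

lemma card_fixed_points_act_H:
  assumes "k \<le> n" and p: "p permutes {..<n}" and s: "s permutes {..<n}"
  shows "card {A \<in> H n k. act n p s A = A}
    = card {t. t permutes {..<n} \<and> p \<circ> t \<circ> inv s = t} * ffac (n - card (supp n p)) k"
proof -
  let ?S = "{(t, xs) \<in> stair_params n k. p \<circ> t \<circ> inv s = t \<and> map p xs = xs}"
  have "inj_on (\<lambda>(t, xs). stair_mat n t xs) ?S"
    by (rule inj_onI) (use stair_mat_inj in auto)
  then have "card {A \<in> H n k. act n p s A = A} = card ?S"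
    unfolding fixed_points_act_H[OF assms] by (rule card_image)
  also have "?S = {t. t permutes {..<n} \<and> p \<circ> t \<circ> inv s = t}
      \<times> {xs. length xs = k \<and> distinct xs \<and> set xs \<subseteq> {x. x < n \<and> p x = x}}"
  proof -
    have "map p xs = xs \<longleftrightarrow> (\<forall>x\<in>set xs. p x = x)" for xs :: "nat list"
      by (metis map_eq_conv map_ident)
    then show ?thesis unfolding stair_params_def by auto
  qed
  also have "card \<dots> = card {t. t permutes {..<n} \<and> p \<circ> t \<circ> inv s = t}
      * card {xs. length xs = k \<and> distinct xs \<and> set xs \<subseteq> {x. x < n \<and> p x = x}}"
    by (rule card_cartesian_product)
  also have "card {xs. length xs = k \<and> distinct xs \<and> set xs \<subseteq> {x. x < n \<and> p x = x}}
      = ffac (n - card (supp n p)) k"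
    using card_distinct_lists_subset[of "{x. x < n \<and> p x = x}" k] card_fixed_points_lessThan by simp
  finally show ?thesis .
qed

section \<open>Irreducible characters are class functions\<close>

definition frobenius_maps :: "nat \<Rightarrow> nat list \<Rightarrow> (nat \<Rightarrow> nat) \<Rightarrow> (nat \<Rightarrow> nat) \<Rightarrow> (nat \<Rightarrow> nat) set" where
  "frobenius_maps n la p w = {g \<in> {..<n} \<rightarrow>\<^sub>E {..<n}. (\<forall>x<n. g (p x) = g x) \<and>
      (\<forall>i<n. card {x. x < n \<and> g x = i} + i = part la i + w i)}"

lemma chi_eq_frobenius_maps:
  "chi n la p = (\<Sum>w | w permutes {..<n}. sign w * int (card (frobenius_maps n la p w)))"
  unfolding chi_def frobenius_maps_def by simp

lemma finite_frobenius_maps: "finite (frobenius_maps n la p w)"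
  by (rule finite_subset[of _ "{..<n} \<rightarrow>\<^sub>E {..<n}"]) (auto simp: frobenius_maps_def finite_PiE)

lemma card_frobenius_maps_le_conj:
  assumes p: "p permutes {..<n}" and t: "t permutes {..<n}"
  shows "card (frobenius_maps n la p w) \<le> card (frobenius_maps n la (inv t \<circ> p \<circ> t) w)"
proof (rule card_inj_on_le)
  let ?f = "\<lambda>g. restrict (g \<circ> t) {..<n}"
  show "?f ` frobenius_maps n la p w \<subseteq> frobenius_maps n la (inv t \<circ> p \<circ> t) w"
  proof (rule image_subsetI)
    fix g assume "g \<in> frobenius_maps n la p w"
    then have g: "g \<in> {..<n} \<rightarrow>\<^sub>E {..<n}" and inv: "\<And>x. x < n \<Longrightarrow> g (p x) = g x"
      and cards: "\<And>i. i < n \<Longrightarrow> card {x. x < n \<and> g x = i} + i = part la i + w i"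
      unfolding frobenius_maps_def by auto
    have "?f g \<in> {..<n} \<rightarrow>\<^sub>E {..<n}"
      using g permutes_lessThan_less[OF t] by auto
    moreover have "?f g ((inv t \<circ> p \<circ> t) x) = ?f g x" if "x < n" for x
      using inv[OF permutes_lessThan_less[OF t that]] that
        permutes_lessThan_inv_less[OF t
          permutes_lessThan_less[OF p permutes_lessThan_less[OF t that]]]
        permutes_inverses(1)[OF t] by simp
    moreover have "card {x. x < n \<and> ?f g x = i} = card {x. x < n \<and> g x = i}" for i
    proof -
      have "{x. x < n \<and> ?f g x = i} = {x. x < n \<and> g (t x) = i}" by auto
      then show ?thesis using card_filter_lessThan_permutes[OF t, of "\<lambda>y. g y = i"] by simp
    qed
    ultimately show "?f g \<in> frobenius_maps n la (inv t \<circ> p \<circ> t) w"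
      unfolding frobenius_maps_def using cards by simp
  qed
  show "inj_on ?f (frobenius_maps n la p w)"
  proof (rule inj_onI)
    fix g g' assume "g \<in> frobenius_maps n la p w" "g' \<in> frobenius_maps n la p w"
      and eq: "?f g = ?f g'"
    then have "g \<in> {..<n} \<rightarrow>\<^sub>E {..<n}" "g' \<in> {..<n} \<rightarrow>\<^sub>E {..<n}" unfolding frobenius_maps_def by auto
    moreover have "g x = g' x" if "x < n" for x
      using fun_cong[OF eq, of "inv t x"] permutes_lessThan_inv_less[OF t that]
        permutes_inverses(1)[OF t]
      by simp
    ultimately show "g = g'" by (rule PiE_ext) simp
  qed
qed (rule finite_frobenius_maps)

lemma chi_conj:
  assumes p: "p permutes {..<n}" and t: "t permutes {..<n}"
  shows "chi n la (inv t \<circ> p \<circ> t) = chi n la p"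
proof -
  have conj: "inv t \<circ> p \<circ> t permutes {..<n}"
    using p t by (intro permutes_compose permutes_inv)
  have "inv (inv t) \<circ> (inv t \<circ> p \<circ> t) \<circ> inv t = p"
    using inv_inv_eq[OF permutes_bij[OF t]] permutes_inv_o[OF t]
    by (simp add: comp_assoc flip: comp_assoc[of t "inv t"])
  then have "card (frobenius_maps n la (inv t \<circ> p \<circ> t) w) \<le> card (frobenius_maps n la p w)" for w
    using card_frobenius_maps_le_conj[OF conj permutes_inv[OF t]] by metis
  then show ?thesis
    unfolding chi_eq_frobenius_maps using card_frobenius_maps_le_conj[OF p t] le_antisym by metis
qed

section \<open>The multiplicity formula\<close>

lemma sum_fixed_points_act_H:
  assumes "k \<le> n" and p: "p permutes {..<n}"
  shows "(\<Sum>s | s permutes {..<n}. real (card {A \<in> H n k. act n p s A = A}) * of_int (chi n mu s))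
    = fact n * real (ffac (n - card (supp n p)) k) * of_int (chi n mu p)"
proof -
  have "(\<Sum>s | s permutes {..<n}. real (card {A \<in> H n k. act n p s A = A}) * of_int (chi n mu s))
      = real (ffac (n - card (supp n p)) k) * (\<Sum>s | s permutes {..<n}.
          real (card {t. t permutes {..<n} \<and> p \<circ> t \<circ> inv s = t}) * of_int (chi n mu s))"
    by (simp add: card_fixed_points_act_H[OF assms(1) p] sum_distrib_left mult_ac)
  also have "\<dots> = real (ffac (n - card (supp n p)) k)
      * (\<Sum>t | t permutes {..<n}. of_int (chi n mu p))"
    by (simp add: sum_card_conjugators[OF p] chi_conj[OF p])
  also have "\<dots> = fact n * real (ffac (n - card (supp n p)) k) * of_int (chi n mu p)"
    by (simp add: card_permutations)
  finally show ?thesis .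
qed

theorem mainTheorem9:
  fixes n k :: nat and la mu :: "nat list"
  assumes "k \<le> n" and "is_partition n la" and "is_partition n mu"
  shows "mult_perm_rep n (H n k) (act n) la mu =
    (1 / fact n) * (\<Sum>p | p permutes {..<n}.
       of_int (chi n la p) * of_int (chi n mu p) * real (ffac (n - card (supp n p)) k))"
proof -
  have "mult_perm_rep n (H n k) (act n) la mu
      = (1 / (fact n)^2) * (\<Sum>p | p permutes {..<n}. of_int (chi n la p) *
          (\<Sum>s | s permutes {..<n}. real (card {A \<in> H n k. act n p s A = A}) * of_int (chi n mu s)))"
    unfolding mult_perm_rep_def by (simp add: sum_distrib_left mult_ac)
  also have "\<dots> = (1 / (fact n)^2) * (\<Sum>p | p permutes {..<n}. fact n *
      (of_int (chi n la p) * of_int (chi n mu p) * real (ffac (n - card (supp n p)) k)))"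
    by (intro arg_cong[where f = "(*) _"] sum.cong refl)
      (simp add: sum_fixed_points_act_H[OF assms(1)])
  finally show ?thesis by (simp add: sum_distrib_left[symmetric] power2_eq_square)
qed

end
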